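(* Define polynomials $q_k(x)\in\mathbb{Z}[x]$ for integers $k\ge 0$ by $$q_0(x)=x^2-5x+3,\qquad q_1(x)=(x^3-8x^2+17x-5)(x-1),$$ $$q_k(x)=(x^2-4x+2)\,q_{k-1}(x)-q_{k-2}(x)\quad (k\ge 2).$$ Then for every integer $k\ge 0$, the polynomial $q_k(x)$ is divisible by $(x-1)$ if and only if $k\equiv 1 \pmod 3$.
   Context: The polynomials $q_k$ are, up to the factor $(x-2)^2$, the characteristic polynomials of $A_k^tA_k$, where $A_k$ is the even-to-odd incidence matrix of a certain bipartite tree $\Gamma_k$; this is background only and is not needed for the claim. *)

theory Defs
  imports "HOL-Computational_Algebra.Polynomial"
begin

fun q :: "nat \<Rightarrow> int poly" where
  "q 0 = [:3, -5, 1:]"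
| "q (Suc 0) = [:-5, 17, -8, 1:] * [:-1, 1:]"
| "q (Suc (Suc k)) = [:2, -4, 1:] * q (Suc k) - q k"

end

theory Submission
  imports Defs
begin

(* Divisibility by x - 1 means vanishing at 1. Since 1 - 4 + 2 = -1, the values q_k(1) obey
   s_k = - s_(k-1) - s_(k-2), and starting from s_0 = -1, s_1 = 0 they cycle through -1, 0, 1. *)

lemma poly_q_Suc_Suc_at_1: "poly (q (Suc (Suc k))) 1 = - poly (q (Suc k)) 1 - poly (q k) 1"
  by simp

lemma poly_q_at_1:
  "poly (q k) 1 = (if k mod 3 = 0 then -1 else if k mod 3 = 1 then 0 else 1)"
proof (induction k rule: q.induct)
  case (3 k)
  then show ?case
    unfolding poly_q_Suc_Suc_at_1 by (auto simp: mod_Suc)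
qed simp_all

theorem mainTheorem1:
  fixes k :: nat
  shows "[:-1, 1:] dvd q k \<longleftrightarrow> k mod 3 = 1"
proof -
  have "[:-1, 1:] dvd q k \<longleftrightarrow> poly (q k) 1 = 0"
    using poly_eq_0_iff_dvd[of "q k" 1] by simp
  also have "\<dots> \<longleftrightarrow> k mod 3 = 1"
    by (simp add: poly_q_at_1)
  finally show ?thesis .
qed

end
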